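(* Let $G$ be a compact group and let $X$ be a separable Banach space whose dual $X^*$ is strictly convex. Let $T$ be an isometric, invertible, left multiplier of $C(G,X)$. Then there exist an isometry $U$ of $X$ onto itself and $y\in G$ such that $T=U\circ R_y$, i.e. $(Tf)(s)=U(f(sy))$ for all $f\in C(G,X)$ and all $s\in G$.
   Context: $C(G,X)$ denotes the Banach space of continuous $X$-valued functions on $G$ with the supremum norm. For $g\in G$, $(L_gf)(s)=f(gs)$ and $(R_gf)(s)=f(sg)$. A left multiplier of $C(G,X)$ is a bounded linear operator on $C(G,X)$ commuting with every left translation $L_g$, $g\in G$. *)

theory Defs
  imports "HOL-Analysis.Analysis"
begin

definition strictly_convex :: "'a::real_normed_vector itself \<Rightarrow> bool" where
  "strictly_convex _ \<longleftrightarrow>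
     (\<forall>x y :: 'a. norm x = 1 \<and> norm y = 1 \<and> x \<noteq> y \<longrightarrow> norm ((1/2) *\<^sub>R (x + y)) < 1)"

text \<open>Left translation on C(G,X): (L_g f)(s) = f(g s); the group G is written additively
  (class topological_group_add, which does not require commutativity).\<close>
definition left_transl :: "'g::topological_group_add \<Rightarrow> ('g \<Rightarrow>\<^sub>C 'x::real_normed_vector) \<Rightarrow> ('g \<Rightarrow>\<^sub>C 'x)" where
  "left_transl g f = Bcontfun (\<lambda>s. apply_bcontfun f (g + s))"

definition left_multiplier :: "(('g::topological_group_add \<Rightarrow>\<^sub>C 'x::real_normed_vector) \<Rightarrow> ('g \<Rightarrow>\<^sub>C 'x)) \<Rightarrow> bool" where
  "left_multiplier T \<longleftrightarrow> bounded_linear T \<and> (\<forall>g f. T (left_transl g f) = left_transl g (T f))"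

end

theory Submission
  imports Defs
begin

text \<open>A left multiplier maps constant functions to constant functions, which yields the
  isometry \<open>U x = (T x)(0)\<close>; with \<open>\<Phi> f = U\<^sup>-\<^sup>1 ((T f)(0))\<close> one has \<open>(T f)(s) = U (\<Phi> (L\<^sub>s f))\<close>, so it
  suffices to show that \<open>\<Phi>\<close> is evaluation at a point \<open>y\<close>. The map \<open>\<Phi>\<close> is a linear contraction
  fixing constants, and since \<open>T f\<close> attains its norm, every \<open>f\<close> has a translate with
  \<open>\<parallel>\<Phi> (L\<^sub>s f)\<parallel> = \<parallel>f\<parallel>\<close>.

  For continuous \<open>a : G \<rightarrow> [0,1]\<close>, strict convexity of \<open>X\<^sup>*\<close> forces \<open>\<Phi> (a \<cdot> x) = m(a) x\<close> with a
  scalar \<open>m(a) \<in> [0,1]\<close> (Hahn-Banach turns the statement about functionals into one about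
  vectors). The weight \<open>m\<close> is additive, monotone and normalised, and \<open>\<parallel>\<Phi> (a f)\<parallel> \<le> m(a) \<parallel>f\<parallel>\<close>.
  Norm-attaining translates show that \<open>m\<close> is carried by a translate of every neighbourhood
  of the identity, so the closed sets carrying \<open>m\<close> separate points; by compactness they shrink
  to one point \<open>y\<close> carrying \<open>m\<close>, and then \<open>\<Phi> f = f y\<close>.\<close>

section \<open>Continuous functions into the unit interval\<close>

definition cont01 :: "('a::topological_space \<Rightarrow> real) \<Rightarrow> bool" where
  "cont01 a \<longleftrightarrow> continuous_on UNIV a \<and> (\<forall>t. 0 \<le> a t \<and> a t \<le> 1)"

lemma cont01D:
  assumes "cont01 a"
  shows "continuous_on UNIV a" "0 \<le> a t" "a t \<le> 1"
  using assms by (auto simp: cont01_def)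

lemma cont01_const: "0 \<le> c \<Longrightarrow> c \<le> 1 \<Longrightarrow> cont01 (\<lambda>_. c)"
  by (simp add: cont01_def)

lemma cont01_compl: "cont01 a \<Longrightarrow> cont01 (\<lambda>t. 1 - a t)"
  unfolding cont01_def by (auto intro!: continuous_intros)

lemma cont01_mult: "cont01 a \<Longrightarrow> cont01 b \<Longrightarrow> cont01 (\<lambda>t. a t * b t)"
  unfolding cont01_def by (auto intro!: continuous_intros mult_le_one)

lemma cont01_truncate:
  assumes "cont01 a" "0 \<le> \<epsilon>"
  shows "cont01 (\<lambda>t. max (a t - \<epsilon>) 0)"
proof -
  have "max (a t - \<epsilon>) 0 \<le> 1" for t
    using cont01D(3)[OF assms(1), of t] assms(2) by simp
  then show ?thesis
    using cont01D(1)[OF assms(1)] unfolding cont01_def by (auto intro!: continuous_intros)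
qed

lemma cont01_translate:
  fixes a :: "'g::topological_monoid_add \<Rightarrow> real"
  assumes "cont01 a"
  shows "cont01 (\<lambda>t. a (s + t))"
proof -
  have "continuous_on UNIV (\<lambda>t. a (s + t))"
    using cont01D(1)[OF assms]
    by (rule continuous_on_compose2[where t=UNIV]) (auto intro!: continuous_intros)
  then show ?thesis
    using assms by (simp add: cont01_def)
qed

lemma Urysohn_compact_t2:
  fixes S T :: "'a::t2_space set"
  assumes "compact (UNIV :: 'a set)" "closed S" "closed T" "S \<inter> T = {}"
  obtains f where "cont01 f" "\<And>t. t \<in> S \<Longrightarrow> f t = 0" "\<And>t. t \<in> T \<Longrightarrow> f t = 1"
proof -
  have "Hausdorff_space (euclidean :: 'a topology)"
    unfolding Hausdorff_space_def using separation_t2 by (auto simp: disjnt_def)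
  then have "normal_space (euclidean :: 'a topology)"
    using assms(1) by (intro compact_Hausdorff_or_regular_imp_normal_space)
      (auto simp: compact_space_def)
  then obtain f where f: "continuous_map euclidean (top_of_set {0..1::real}) f"
      "f ` S \<subseteq> {0}" "f ` T \<subseteq> {1}"
    using Urysohn_lemma[of euclidean S T 0 1] assms by (auto simp: disjnt_def)
  have "continuous_on UNIV f"
    using f(1) by (metis continuous_map_in_subtopology continuous_map_iff_continuous2)
  moreover have "0 \<le> f t \<and> f t \<le> 1" for t
    using f(1) by (auto simp: continuous_map_in_subtopology)
  ultimately have "cont01 f"
    by (simp add: cont01_def)
  moreover have "f t = 0" if "t \<in> S" for t
    using f(2) that by auto
  moreover have "f t = 1" if "t \<in> T" for t
    using f(3) that by auto
  ultimately show thesis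
    by (rule that)
qed

lemma bump_compact_t2:
  fixes W :: "'a::t2_space set"
  assumes "compact (UNIV :: 'a set)" "open W" "x \<in> W"
  obtains a C where "cont01 a" "a x = 1" "closed C" "C \<subseteq> W" "\<And>t. t \<notin> C \<Longrightarrow> a t = 0"
proof -
  obtain a0 where a0: "cont01 a0" "\<And>t. t \<in> - W \<Longrightarrow> a0 t = 0" "a0 x = 1"
    using Urysohn_compact_t2[OF assms(1), of "- W" "{x}"] assms(2,3) by (auto simp: closed_Compl)
  define C where "C = {t. 1/2 \<le> a0 t}"
  define a where "a t = max 0 (2 * a0 t - 1)" for t
  have "closed C"
    unfolding C_def using cont01D(1)[OF a0(1)] by (rule closed_Collect_le[OF continuous_on_const])
  moreover have "cont01 a"
    using a0(1) unfolding cont01_def a_def by (auto intro!: continuous_intros)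
  moreover have "C \<subseteq> W"
    using a0(2) by (force simp: C_def)
  ultimately show thesis
    by (intro that[of a C]) (auto simp: a_def C_def a0(3))
qed

lemma cont01_split_near_closed_Int:
  fixes C1 C2 :: "'a::t2_space set"
  assumes "compact (UNIV :: 'a set)" "closed C1" "closed C2" and c: "cont01 c"
    and vanish: "\<And>t. t \<in> C1 \<inter> C2 \<Longrightarrow> c t = 0" and "0 < \<epsilon>"
  obtains p q where "cont01 p" "cont01 q" "\<And>t. t \<in> C1 \<Longrightarrow> p t = 0" "\<And>t. t \<in> C2 \<Longrightarrow> q t = 0"
    "\<And>t. p t + q t = max (c t - \<epsilon>) 0"
proof -
  define D where "D = {t. \<epsilon> \<le> c t}"
  have "closed D"
    unfolding D_def using cont01D(1)[OF c] by (rule closed_Collect_le[OF continuous_on_const])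
  moreover have "(D \<inter> C1) \<inter> (D \<inter> C2) = {}"
    using vanish \<open>0 < \<epsilon>\<close> by (force simp: D_def)
  ultimately obtain u where u: "cont01 u" "\<And>t. t \<in> D \<inter> C1 \<Longrightarrow> u t = 0" "\<And>t. t \<in> D \<inter> C2 \<Longrightarrow> u t = 1"
    using Urysohn_compact_t2[OF assms(1), of "D \<inter> C1" "D \<inter> C2"] assms(2,3) by blast
  let ?c' = "\<lambda>t. max (c t - \<epsilon>) 0"
  have c': "cont01 ?c'"
    using cont01_truncate[OF c] \<open>0 < \<epsilon>\<close> by simp
  show thesis
  proof (rule that[of "\<lambda>t. u t * ?c' t" "\<lambda>t. (1 - u t) * ?c' t"])
    show "cont01 (\<lambda>t. u t * ?c' t)" "cont01 (\<lambda>t. (1 - u t) * ?c' t)"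
      using u(1) c' by (simp_all add: cont01_mult cont01_compl)
    show "u t * ?c' t = 0" if "t \<in> C1" for t
      using u(2)[of t] that by (cases "t \<in> D") (auto simp: D_def)
    show "(1 - u t) * ?c' t = 0" if "t \<in> C2" for t
      using u(3)[of t] that by (cases "t \<in> D") (auto simp: D_def)
    show "u t * ?c' t + (1 - u t) * ?c' t = ?c' t" for t
      by (simp add: algebra_simps)
  qed
qed

lemma compact_Inter_closed_subset_open:
  fixes \<F> :: "'a::topological_space set set"
  assumes "compact (UNIV :: 'a set)" "\<And>C. C \<in> \<F> \<Longrightarrow> closed C"
    and "open V" "\<Inter>\<F> \<subseteq> V"
  obtains \<F>' where "finite \<F>'" "\<F>' \<subseteq> \<F>" "\<Inter>\<F>' \<subseteq> V"
proof -
  have "\<exists>\<F>''. finite \<F>'' \<and> \<F>'' \<subseteq> insert (- V) \<F> \<and> \<Inter>\<F>'' = {}"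
  proof (rule ccontr)
    assume no_finite: "\<not> ?thesis"
    have "UNIV \<inter> \<Inter>(insert (- V) \<F>) \<noteq> {}"
    proof (rule compact_imp_fip[OF assms(1)])
      show "closed C" if "C \<in> insert (- V) \<F>" for C
        using that assms(2,3) by (metis closed_Compl insertE)
      show "UNIV \<inter> \<Inter>\<F>' \<noteq> {}" if "finite \<F>'" "\<F>' \<subseteq> insert (- V) \<F>" for \<F>'
        using no_finite that by auto
    qed
    with assms(4) show False
      by blast
  qed
  then obtain \<F>'' where "finite \<F>''" "\<F>'' \<subseteq> insert (- V) \<F>" "\<Inter>\<F>'' = {}"
    by blast
  moreover have "\<Inter>(\<F>'' - {- V}) \<subseteq> V"
    using \<open>\<Inter>\<F>'' = {}\<close> by blast
  ultimately show thesis
    by (intro that[of "\<F>'' - {- V}"]) auto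
qed

lemma nhds_zero_avoiding_difference:
  fixes d :: "'g::{topological_group_add, t1_space}"
  assumes "d \<noteq> 0"
  obtains W where "open W" "0 \<in> W" "\<And>u v. u \<in> W \<Longrightarrow> v \<in> W \<Longrightarrow> - v + u \<noteq> d"
proof -
  let ?h = "\<lambda>z::'g \<times> 'g. - snd z + fst z"
  have "open (?h -` (- {d}))"
    by (intro open_vimage open_Compl closed_singleton continuous_intros)
  moreover have "(0, 0) \<in> ?h -` (- {d})"
    using assms by simp
  ultimately obtain A B where AB: "open A" "open B" "(0, 0) \<in> A \<times> B"
      "A \<times> B \<subseteq> ?h -` (- {d})"
    by (rule open_prod_elim)
  have avoid: "- v + u \<noteq> d" if "u \<in> A \<inter> B" "v \<in> A \<inter> B" for u v
  proof -
    have "(u, v) \<in> ?h -` (- {d})"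
      using that AB(4) by blast
    then show ?thesis
      by simp
  qed
  show thesis
    by (rule that[of "A \<inter> B", OF _ _ avoid]) (use AB(1-3) in auto)
qed

section \<open>Norming functionals\<close>

text \<open>Such an \<open>M\<close> is the graph of a linear functional on a subspace that is dominated by
  the norm; single-valuedness is a consequence of the domination.\<close>

definition norm_dominated_graph :: "('a::real_normed_vector \<times> real) set \<Rightarrow> bool" where
  "norm_dominated_graph M \<longleftrightarrow>
     (\<forall>x a y b. (x, a) \<in> M \<longrightarrow> (y, b) \<in> M \<longrightarrow> (x + y, a + b) \<in> M) \<and>
     (\<forall>x a c. (x, a) \<in> M \<longrightarrow> (c *\<^sub>R x, c * a) \<in> M) \<and>
     (\<forall>x a. (x, a) \<in> M \<longrightarrow> a \<le> norm x)"

lemma norm_dominated_graphI: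
  assumes "\<And>x a y b. (x, a) \<in> M \<Longrightarrow> (y, b) \<in> M \<Longrightarrow> (x + y, a + b) \<in> M"
    and "\<And>x a c. (x, a) \<in> M \<Longrightarrow> (c *\<^sub>R x, c * a) \<in> M"
    and "\<And>x a. (x, a) \<in> M \<Longrightarrow> a \<le> norm x"
  shows "norm_dominated_graph M"
  using assms unfolding norm_dominated_graph_def by blast

lemma norm_dominated_graphD:
  assumes "norm_dominated_graph M"
  shows norm_dominated_graph_add: "(x, a) \<in> M \<Longrightarrow> (y, b) \<in> M \<Longrightarrow> (x + y, a + b) \<in> M"
    and norm_dominated_graph_scaleR: "(x, a) \<in> M \<Longrightarrow> (c *\<^sub>R x, c * a) \<in> M"
    and norm_dominated_graph_le: "(x, a) \<in> M \<Longrightarrow> a \<le> norm x"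
  using assms unfolding norm_dominated_graph_def by blast+

lemma norm_dominated_graph_single_valued:
  assumes M: "norm_dominated_graph M" and "(x, a) \<in> M" "(x, b) \<in> M"
  shows "a = b"
proof -
  have "(x + - 1 *\<^sub>R x, a + - 1 * b) \<in> M" "(x + - 1 *\<^sub>R x, b + - 1 * a) \<in> M"
    using norm_dominated_graphD(1,2)[OF M] assms(2,3) by blast+
  then have "a - b \<le> norm (0 :: 'a)" "b - a \<le> norm (0 :: 'a)"
    using norm_dominated_graphD(3)[OF M] by fastforce+
  then show ?thesis
    by simp
qed

lemma norm_scaleR_inverse_add:
  fixes x w :: "'a::real_normed_vector"
  assumes "0 < r"
  shows "r * norm ((1 / r) *\<^sub>R x + w) = norm (x + r *\<^sub>R w)"
proof -
  have "r * norm ((1 / r) *\<^sub>R x + w) = norm (r *\<^sub>R ((1 / r) *\<^sub>R x + w))"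
    using assms by simp
  also have "r *\<^sub>R ((1 / r) *\<^sub>R x + w) = x + r *\<^sub>R w"
    using assms by (simp add: algebra_simps)
  finally show ?thesis .
qed

lemma norm_dominated_graph_zero:
  assumes "norm_dominated_graph M" "M \<noteq> {}"
  shows "(0, 0) \<in> M"
proof -
  obtain x a where "(x, a) \<in> M"
    using assms(2) by auto
  then show ?thesis
    using norm_dominated_graph_scaleR[OF assms(1), of x a 0] by simp
qed

lemma norm_dominated_graph_admissible_value:
  assumes M: "norm_dominated_graph M" and "M \<noteq> {}"
  obtains c where "\<And>x a t. (x, a) \<in> M \<Longrightarrow> a + t * c \<le> norm (x + t *\<^sub>R z)"
proof -
  note add = norm_dominated_graph_add[OF M] and scl = norm_dominated_graph_scaleR[OF M]
    and bnd = norm_dominated_graph_le[OF M]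
  note zero = norm_dominated_graph_zero[OF assms]
  have sep: "a - norm (x - z) \<le> norm (y + z) - b" if "(x, a) \<in> M" "(y, b) \<in> M" for x a y b
  proof -
    have "a + b \<le> norm ((x - z) + (y + z))"
      using bnd[OF add[OF that]] by simp
    also have "\<dots> \<le> norm (x - z) + norm (y + z)"
      by (rule norm_triangle_ineq)
    finally show ?thesis
      by simp
  qed
  \<comment> \<open>Any \<open>c\<close> between the two sides of \<open>sep\<close> is an admissible value at \<open>z\<close>.\<close>
  define c where "c = Sup ((\<lambda>(x, a). a - norm (x - z)) ` M)"
  have c_lower: "a - norm (x - z) \<le> c" if "(x, a) \<in> M" for x a
    unfolding c_def using that sep[OF _ zero]
    by (intro cSup_upper) (auto intro!: bdd_aboveI[of _ "norm z"])
  have c_upper: "c \<le> norm (y + z) - b" if "(y, b) \<in> M" for y b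
    unfolding c_def using assms(2) sep[OF _ that] by (intro cSup_least) auto
  show thesis
  proof (rule that)
    fix x a t
    assume "(x, a) \<in> M"
    show "a + t * c \<le> norm (x + t *\<^sub>R z)"
    proof (cases t "0 :: real" rule: linorder_cases)
      case less
      have "- t * ((1 / - t) * a - norm ((1 / - t) *\<^sub>R x + - z)) \<le> - t * c"
        using c_lower[OF scl[OF \<open>(x, a) \<in> M\<close>, of "1 / - t"]] less by (intro mult_left_mono) simp_all
      moreover have "- t * ((1 / - t) * a - norm ((1 / - t) *\<^sub>R x + - z)) = a - norm (x + t *\<^sub>R z)"
        using norm_scaleR_inverse_add[of "- t" x "- z"] less by (simp add: algebra_simps)
      ultimately show ?thesis
        by simp
    next
      case equal
      then show ?thesis
        using bnd[OF \<open>(x, a) \<in> M\<close>] by simp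
    next
      case greater
      have "t * c \<le> t * (norm ((1 / t) *\<^sub>R x + z) - (1 / t) * a)"
        using c_upper[OF scl[OF \<open>(x, a) \<in> M\<close>, of "1 / t"]] greater by (intro mult_left_mono) simp_all
      moreover have "t * (norm ((1 / t) *\<^sub>R x + z) - (1 / t) * a) = norm (x + t *\<^sub>R z) - a"
        using norm_scaleR_inverse_add[of t x z] greater by (simp add: algebra_simps)
      ultimately show ?thesis
        by simp
    qed
  qed
qed

lemma norm_dominated_graph_extend:
  assumes M: "norm_dominated_graph M" and "M \<noteq> {}"
  obtains M' where "norm_dominated_graph M'" "M \<subseteq> M'" "\<exists>c. (z, c) \<in> M'"
proof -
  note add = norm_dominated_graph_add[OF M] and scl = norm_dominated_graph_scaleR[OF M]
  obtain c where le_norm: "\<And>x a t. (x, a) \<in> M \<Longrightarrow> a + t * c \<le> norm (x + t *\<^sub>R z)"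
    using norm_dominated_graph_admissible_value[OF assms] by blast
  define M' where "M' = {(x + t *\<^sub>R z, a + t * c) | x a t. (x, a) \<in> M}"
  have "norm_dominated_graph M'"
  proof (rule norm_dominated_graphI)
    fix x a y b
    assume "(x, a) \<in> M'" "(y, b) \<in> M'"
    then obtain x1 a1 t1 x2 a2 t2 where "(x1, a1) \<in> M" "(x2, a2) \<in> M"
      and "x = x1 + t1 *\<^sub>R z" "a = a1 + t1 * c" "y = x2 + t2 *\<^sub>R z" "b = a2 + t2 * c"
      unfolding M'_def by blast
    moreover have "(x + y, a + b) = ((x1 + x2) + (t1 + t2) *\<^sub>R z, (a1 + a2) + (t1 + t2) * c)"
      using calculation by (simp add: algebra_simps)
    ultimately show "(x + y, a + b) \<in> M'"
      unfolding M'_def using add by blast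
  next
    fix x a r
    assume "(x, a) \<in> M'"
    then obtain x1 a1 t1 where "(x1, a1) \<in> M" "x = x1 + t1 *\<^sub>R z" "a = a1 + t1 * c"
      unfolding M'_def by blast
    moreover have "(r *\<^sub>R x, r * a) = (r *\<^sub>R x1 + (r * t1) *\<^sub>R z, r * a1 + (r * t1) * c)"
      using calculation by (simp add: algebra_simps)
    ultimately show "(r *\<^sub>R x, r * a) \<in> M'"
      unfolding M'_def using scl by blast
  next
    fix x a
    assume "(x, a) \<in> M'"
    then show "a \<le> norm x"
      unfolding M'_def using le_norm by blast
  qed
  moreover have "M \<subseteq> M'"
    unfolding M'_def by (force intro: exI[of _ 0])
  moreover have "(z, c) \<in> M'"
    unfolding M'_def using norm_dominated_graph_zero[OF assms] by (force intro: exI[of _ 1])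
  ultimately show thesis
    using that by blast
qed

lemma norm_dominated_graph_Union_chain:
  assumes "subset.chain {M. norm_dominated_graph M} \<C>"
  shows "norm_dominated_graph (\<Union>\<C>)"
proof -
  have graphs: "norm_dominated_graph M" if "M \<in> \<C>" for M
    using assms that by (auto simp: subset_chain_def)
  have common: "\<exists>M\<in>\<C>. p \<in> M \<and> q \<in> M" if "p \<in> \<Union>\<C>" "q \<in> \<Union>\<C>" for p q
    using assms that unfolding subset_chain_def by blast
  show ?thesis
  proof (rule norm_dominated_graphI)
    fix x a y b
    assume "(x, a) \<in> \<Union>\<C>" "(y, b) \<in> \<Union>\<C>"
    then show "(x + y, a + b) \<in> \<Union>\<C>"
      using common graphs norm_dominated_graph_add by blast
  next
    fix x a c
    assume "(x, a) \<in> \<Union>\<C>"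
    then show "(c *\<^sub>R x, c * a) \<in> \<Union>\<C>"
      using graphs norm_dominated_graph_scaleR by blast
  next
    fix x a
    assume "(x, a) \<in> \<Union>\<C>"
    then show "a \<le> norm x"
      using graphs norm_dominated_graph_le by blast
  qed
qed

lemma norm_dominated_graph_line:
  fixes v :: "'a::real_normed_vector"
  defines "L \<equiv> range (\<lambda>t. (t *\<^sub>R v, t * norm v))"
  shows "norm_dominated_graph L" "(v, norm v) \<in> L"
proof -
  show "norm_dominated_graph L"
  proof (rule norm_dominated_graphI)
    fix x a y b
    assume "(x, a) \<in> L" "(y, b) \<in> L"
    then obtain s t where "x = s *\<^sub>R v" "a = s * norm v" "y = t *\<^sub>R v" "b = t * norm v"
      unfolding L_def by blast
    then have "(x + y, a + b) = ((s + t) *\<^sub>R v, (s + t) * norm v)"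
      by (simp add: algebra_simps)
    then show "(x + y, a + b) \<in> L"
      unfolding L_def by blast
  next
    fix x a c
    assume "(x, a) \<in> L"
    then obtain s where "x = s *\<^sub>R v" "a = s * norm v"
      unfolding L_def by blast
    then have "(c *\<^sub>R x, c * a) = ((c * s) *\<^sub>R v, (c * s) * norm v)"
      by simp
    then show "(c *\<^sub>R x, c * a) \<in> L"
      unfolding L_def by blast
  next
    fix x a
    assume "(x, a) \<in> L"
    then show "a \<le> norm x"
      unfolding L_def by (auto intro!: mult_right_mono)
  qed
  have "(v, norm v) = (1 *\<^sub>R v, 1 * norm v)"
    by simp
  then show "(v, norm v) \<in> L"
    unfolding L_def by blast
qed

lemma norm_dominated_graph_total_blinfun:
  assumes M: "norm_dominated_graph M" and total: "\<And>x. \<exists>a. (x, a) \<in> M"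
  obtains \<phi> :: "'a::real_normed_vector \<Rightarrow>\<^sub>L real" where "norm \<phi> \<le> 1" "\<And>x a. (x, a) \<in> M \<Longrightarrow> \<phi> x = a"
proof -
  define \<phi> where "\<phi> x = (THE a. (x, a) \<in> M)" for x
  have graph: "(x, \<phi> x) \<in> M" for x
    unfolding \<phi>_def using total[of x] norm_dominated_graph_single_valued[OF M]
    by (metis theI)
  have \<phi>_eq: "\<phi> x = a" if "(x, a) \<in> M" for x a
    using norm_dominated_graph_single_valued[OF M graph that] .
  have le: "\<phi> x \<le> norm x" for x
    using norm_dominated_graph_le[OF M graph] .
  have abs_le: "\<bar>\<phi> x\<bar> \<le> norm x" for x
    using le[of x] le[of "- x"] \<phi>_eq[OF norm_dominated_graph_scaleR[OF M graph[of x], of "- 1"]]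
    by auto
  have "bounded_linear \<phi>"
  proof (rule bounded_linear_intro[where K = 1])
    show "\<phi> (x + y) = \<phi> x + \<phi> y" for x y
      using \<phi>_eq norm_dominated_graph_add[OF M graph graph] by blast
    show "\<phi> (r *\<^sub>R x) = r *\<^sub>R \<phi> x" for r x
      using \<phi>_eq norm_dominated_graph_scaleR[OF M graph] by simp
    show "norm (\<phi> x) \<le> norm x * 1" for x
      using abs_le by simp
  qed
  then show thesis
    using \<phi>_eq abs_le
    by (intro that[of "Blinfun \<phi>"]) (auto simp: bounded_linear_Blinfun_apply intro!: norm_blinfun_bound)
qed

lemma exists_norming_functional:
  fixes v :: "'a::real_normed_vector"
  obtains \<phi> :: "'a \<Rightarrow>\<^sub>L real" where "norm \<phi> \<le> 1" "\<phi> v = norm v"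
proof -
  define \<A> where "\<A> = {M. norm_dominated_graph M \<and> (v, norm v) \<in> M}"
  have line: "range (\<lambda>t. (t *\<^sub>R v, t * norm v)) \<in> \<A>"
    unfolding \<A>_def using norm_dominated_graph_line by blast
  have chain_Union: "\<Union>\<C> \<in> \<A>" if "\<C> \<noteq> {}" "subset.chain \<A> \<C>" for \<C>
  proof -
    have "subset.chain {M. norm_dominated_graph M} \<C>"
      using that(2) by (auto simp: subset_chain_def \<A>_def)
    then show ?thesis
      using that by (auto simp: \<A>_def subset_chain_def intro: norm_dominated_graph_Union_chain)
  qed
  obtain M where "M \<in> \<A>" and maximal: "\<And>M'. M' \<in> \<A> \<Longrightarrow> M \<subseteq> M' \<Longrightarrow> M' = M"
    using subset_Zorn_nonempty[of \<A>] line chain_Union by blast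
  then have M: "norm_dominated_graph M" "(v, norm v) \<in> M"
    by (auto simp: \<A>_def)
  have total: "\<exists>a. (x, a) \<in> M" for x
  proof -
    obtain M' where "norm_dominated_graph M'" "M \<subseteq> M'" "\<exists>a. (x, a) \<in> M'"
      using norm_dominated_graph_extend[OF M(1)] M(2) by blast
    then show ?thesis
      using maximal[of M'] M(2) by (auto simp: \<A>_def)
  qed
  obtain \<phi> :: "'a \<Rightarrow>\<^sub>L real" where "norm \<phi> \<le> 1" "\<And>x a. (x, a) \<in> M \<Longrightarrow> \<phi> x = a"
    using norm_dominated_graph_total_blinfun[OF M(1) total] by blast
  then show thesis
    using M(2) that by blast
qed

section \<open>Strict convexity and functionals\<close>

lemma strictly_convex_combination_norm_less:
  fixes u v :: "'a::real_normed_vector"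
  assumes sc: "strictly_convex TYPE('a)"
    and "norm u = 1" "norm v = 1" "u \<noteq> v" "0 < \<alpha>" "\<alpha> < 1"
  shows "norm (\<alpha> *\<^sub>R u + (1 - \<alpha>) *\<^sub>R v) < 1"
proof -
  have less: "norm (\<beta> *\<^sub>R p + (1 - \<beta>) *\<^sub>R q) < 1"
    if "norm p = 1" "norm q = 1" "p \<noteq> q" "0 < \<beta>" "\<beta> \<le> 1/2" for p q :: 'a and \<beta>
  proof -
    have mid: "norm ((1/2) *\<^sub>R (p + q)) < 1"
      using sc that(1-3) unfolding strictly_convex_def by blast
    have "\<beta> *\<^sub>R p + (1 - \<beta>) *\<^sub>R q = (2 * \<beta>) *\<^sub>R ((1/2) *\<^sub>R (p + q)) + (1 - 2 * \<beta>) *\<^sub>R q"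
      by (simp add: algebra_simps scaleR_add_left[symmetric])
    also have "norm \<dots> \<le> 2 * \<beta> * norm ((1/2) *\<^sub>R (p + q)) + (1 - 2 * \<beta>) * norm q"
      using that(4,5) by (intro order.trans[OF norm_triangle_ineq]) simp
    also have "\<dots> < 2 * \<beta> * 1 + (1 - 2 * \<beta>) * 1"
      using mid that by (intro add_less_le_mono mult_strict_left_mono) auto
    finally show ?thesis
      by simp
  qed
  show ?thesis
  proof (cases "\<alpha> \<le> 1/2")
    case True
    then show ?thesis
      using less assms(2-5) by blast
  next
    case False
    then have "norm ((1 - \<alpha>) *\<^sub>R v + (1 - (1 - \<alpha>)) *\<^sub>R u) < 1"
      using less[of v u "1 - \<alpha>"] assms(2-6) by auto
    then show ?thesis
      by (simp add: add.commute)
  qed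
qed

lemma strictly_convex_norm_add_eq:
  fixes u v :: "'a::real_normed_vector"
  assumes sc: "strictly_convex TYPE('a)" and add_eq: "norm (u + v) = norm u + norm v"
  obtains c where "0 \<le> c" "c \<le> 1" "u = c *\<^sub>R (u + v)"
proof (cases "u = 0 \<or> v = 0")
  case True
  then show ?thesis
    using that[of 0] that[of 1] by auto
next
  case False
  define s where "s = norm u + norm v"
  define \<alpha> where "\<alpha> = norm u / s"
  define u' where "u' = (1 / norm u) *\<^sub>R u"
  define v' where "v' = (1 / norm v) *\<^sub>R v"
  have pos: "0 < norm u" "0 < norm v"
    using False by auto
  then have "0 < s"
    unfolding s_def by linarith
  have "0 < \<alpha>"
    unfolding \<alpha>_def using pos \<open>0 < s\<close> by (intro divide_pos_pos)
  moreover have "\<alpha> < 1"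
    unfolding \<alpha>_def using pos \<open>0 < s\<close> by (subst divide_less_eq_1_pos) (simp_all add: s_def)
  ultimately have \<alpha>: "0 < \<alpha>" "\<alpha> < 1" .
  have unit: "norm u' = 1" "norm v' = 1"
    using False by (auto simp: u'_def v'_def)
  \<comment> \<open>\<open>(u + v) / s\<close> is a convex combination of the unit vectors \<open>u'\<close>, \<open>v'\<close> and has norm one.\<close>
  have combination: "\<alpha> *\<^sub>R u' + (1 - \<alpha>) *\<^sub>R v' = (1 / s) *\<^sub>R (u + v)"
    using False \<open>0 < s\<close> by (simp add: \<alpha>_def u'_def v'_def s_def field_simps scaleR_add_right)
  have "norm ((1 / s) *\<^sub>R (u + v)) = 1"
    using add_eq \<open>0 < s\<close> by (simp add: s_def)
  then have "u' = v'"
    using strictly_convex_combination_norm_less[OF sc unit _ \<alpha>] combination by (metis less_irrefl)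
  moreover have u: "u = norm u *\<^sub>R u'"
    using False by (simp add: u'_def)
  ultimately have "v = norm v *\<^sub>R u'"
    using False by (simp add: v'_def)
  with u have "\<alpha> *\<^sub>R (u + v) = (\<alpha> * s) *\<^sub>R u'"
    by (metis s_def scaleR_add_left scaleR_scaleR)
  also have "\<alpha> * s = norm u"
    using \<open>0 < s\<close> by (simp add: \<alpha>_def)
  finally have "u = \<alpha> *\<^sub>R (u + v)"
    using u by simp
  then show ?thesis
    using \<alpha> by (intro that[of \<alpha>]) auto
qed

lemma blinfun_apply_le_norm:
  fixes \<psi> :: "'a::real_normed_vector \<Rightarrow>\<^sub>L real"
  shows "\<psi> x \<le> norm \<psi> * norm x"
  using norm_blinfun[of \<psi> x] by (metis abs_le_D1 real_norm_def)

lemma norm_blinfun_le_of_unit_ball: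
  fixes \<phi> :: "'a::real_normed_vector \<Rightarrow>\<^sub>L real"
  assumes bound: "\<And>x. norm x \<le> 1 \<Longrightarrow> \<phi> x \<le> K"
  shows "norm \<phi> \<le> K"
proof (rule norm_blinfun_bound)
  show "0 \<le> K"
    using bound[of 0] by simp
  show "norm (\<phi> x) \<le> K * norm x" for x
  proof (cases "x = 0")
    case False
    let ?u = "(1 / norm x) *\<^sub>R x"
    have "\<phi> ?u \<le> K" "\<phi> (- ?u) \<le> K"
      using bound False by simp_all
    then have "\<bar>\<phi> ?u\<bar> \<le> K"
      by (simp add: blinfun.minus_right abs_le_iff)
    moreover have "\<phi> x = norm x * \<phi> ?u"
      using False by (simp add: blinfun.scaleR_right)
    ultimately have "\<bar>\<phi> x\<bar> \<le> norm x * K"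
      by (simp add: abs_mult mult_left_mono)
    then show ?thesis
      by (simp add: mult.commute)
  qed simp
qed

lemma norm_add_norm_blinfun_le:
  fixes \<phi> \<psi> :: "'a::real_normed_vector \<Rightarrow>\<^sub>L real"
  assumes "\<And>x y. norm x \<le> 1 \<Longrightarrow> norm y \<le> 1 \<Longrightarrow> \<phi> x + \<psi> y \<le> K"
  shows "norm \<phi> + norm \<psi> \<le> K"
proof -
  have "norm \<phi> \<le> K - \<psi> y" if "norm y \<le> 1" for y
    using assms that by (intro norm_blinfun_le_of_unit_ball) (simp add: algebra_simps)
  then have "norm \<psi> \<le> K - norm \<phi>"
    by (intro norm_blinfun_le_of_unit_ball) (simp add: algebra_simps)
  then show ?thesis
    by simp
qed

lemma adjoint_eigenvalue_unique:
  fixes \<psi> :: "'a::real_normed_vector \<Rightarrow>\<^sub>L real"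
  assumes "\<psi> \<noteq> 0" "\<And>x. \<psi> (W x) = \<mu> * \<psi> x" "\<And>x. \<psi> (W x) = \<mu>' * \<psi> x"
  shows "\<mu> = \<mu>'"
proof -
  obtain x where "\<psi> x \<noteq> 0"
    using assms(1) by (metis blinfun_eqI zero_blinfun.rep_eq)
  then show ?thesis
    using assms(2,3)[of x] by simp
qed

lemma adjoint_eigenvalues_agree:
  fixes \<psi>1 \<psi>2 :: "'a::real_normed_vector \<Rightarrow>\<^sub>L real"
  assumes eigen: "\<And>\<psi> :: 'a \<Rightarrow>\<^sub>L real. \<exists>\<mu>. \<forall>x. \<psi> (W x) = \<mu> * \<psi> x"
    and \<psi>1: "\<psi>1 \<noteq> 0" "\<And>x. \<psi>1 (W x) = \<mu>1 * \<psi>1 x"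
    and \<psi>2: "\<psi>2 \<noteq> 0" "\<And>x. \<psi>2 (W x) = \<mu>2 * \<psi>2 x"
  shows "\<mu>1 = \<mu>2"
proof -
  obtain \<mu>3 where \<mu>3: "\<And>x. (\<psi>1 + \<psi>2) (W x) = \<mu>3 * (\<psi>1 + \<psi>2) x"
    using eigen by blast
  have comb: "(\<mu>1 - \<mu>3) * \<psi>1 x = (\<mu>3 - \<mu>2) * \<psi>2 x" for x
    using \<mu>3[of x] \<psi>1(2)[of x] \<psi>2(2)[of x] by (simp add: blinfun.add_left algebra_simps)
  show ?thesis
  proof (cases "\<mu>1 = \<mu>3")
    case True
    then have "\<psi>2 (W x) = \<mu>3 * \<psi>2 x" for x
      using comb[of x] \<psi>2(2)[of x] by (simp add: algebra_simps)
    then show ?thesis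
      using True adjoint_eigenvalue_unique[OF \<psi>2] by metis
  next
    case False
    define k where "k = (\<mu>3 - \<mu>2) / (\<mu>1 - \<mu>3)"
    have multiple: "\<psi>1 x = k * \<psi>2 x" for x
      using comb[of x] False by (simp add: k_def field_simps)
    have "\<psi>1 (W x) = \<mu>2 * \<psi>1 x" for x
      using \<psi>2(2)[of x] by (simp add: multiple)
    then show ?thesis
      using adjoint_eigenvalue_unique[OF \<psi>1] by metis
  qed
qed

lemma scalar_if_adjoint_eigen:
  fixes W :: "'a::real_normed_vector \<Rightarrow> 'a" and \<psi>0 :: "'a \<Rightarrow>\<^sub>L real"
  assumes eigen: "\<And>\<psi> :: 'a \<Rightarrow>\<^sub>L real. \<exists>\<mu>. \<forall>x. \<psi> (W x) = \<mu> * \<psi> x"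
    and \<psi>0: "\<psi>0 \<noteq> 0" "\<And>x. \<psi>0 (W x) = \<mu> * \<psi>0 x"
  shows "W x = \<mu> *\<^sub>R x"
proof (rule ccontr)
  assume "W x \<noteq> \<mu> *\<^sub>R x"
  obtain \<psi> :: "'a \<Rightarrow>\<^sub>L real" where "\<psi> (W x - \<mu> *\<^sub>R x) = norm (W x - \<mu> *\<^sub>R x)"
    using exists_norming_functional by blast
  with \<open>W x \<noteq> \<mu> *\<^sub>R x\<close> have nonzero: "\<psi> (W x - \<mu> *\<^sub>R x) \<noteq> 0"
    by simp
  then have "\<psi> \<noteq> 0"
    by auto
  moreover obtain \<mu>' where "\<And>y. \<psi> (W y) = \<mu>' * \<psi> y"
    using eigen by blast
  ultimately have "\<And>y. \<psi> (W y) = \<mu> * \<psi> y"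
    using adjoint_eigenvalues_agree[OF eigen \<psi>0] by metis
  with nonzero show False
    by (simp add: blinfun.diff_right blinfun.scaleR_right)
qed

section \<open>Translation-norming maps on bounded continuous functions\<close>

text \<open>Unless \<open>a\<close> is bounded and continuous, \<open>a \<cdot> f\<close> is an unspecified element, as
  \<^const>\<open>Bcontfun\<close> is applied outside its domain.\<close>

definition mult_bcontfun :: "('g::topological_space \<Rightarrow> real) \<Rightarrow> ('g \<Rightarrow>\<^sub>C 'x::real_normed_vector) \<Rightarrow> ('g \<Rightarrow>\<^sub>C 'x)" where
  "mult_bcontfun a f = Bcontfun (\<lambda>t. a t *\<^sub>R f t)"

lemma mult_bcontfun_apply:
  assumes "cont01 a"
  shows "mult_bcontfun a f t = a t *\<^sub>R f t"
proof -
  have "norm (a t *\<^sub>R f t) \<le> norm f" for t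
    using cont01D(2,3)[OF assms, of t] norm_bounded[of f t]
    by (simp add: mult_le_one order_trans[OF mult_left_le_one_le])
  then have "(\<lambda>t. a t *\<^sub>R f t) \<in> bcontfun"
    using cont01D(1)[OF assms] by (intro bcontfun_normI) (auto intro!: continuous_intros)
  then show ?thesis
    by (simp add: mult_bcontfun_def Bcontfun_inverse)
qed

lemma norm_mult_bcontfun_convex_le:
  assumes a: "cont01 a" and "norm f \<le> 1" "norm g \<le> 1"
  shows "norm (mult_bcontfun a f + mult_bcontfun (\<lambda>t. 1 - a t) g) \<le> 1"
proof (rule norm_bound)
  fix t
  have "norm (f t) \<le> 1" "norm (g t) \<le> 1"
    using assms(2,3) norm_bounded order_trans by blast+
  moreover have "0 \<le> a t" "a t \<le> 1"
    using cont01D[OF a] by auto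
  ultimately have "norm (a t *\<^sub>R f t + (1 - a t) *\<^sub>R g t) \<le> a t * 1 + (1 - a t) * 1"
    by (intro order.trans[OF norm_triangle_ineq] add_mono) (simp_all add: mult_left_le)
  then show "norm ((mult_bcontfun a f + mult_bcontfun (\<lambda>t. 1 - a t) g) t) \<le> 1"
    by (simp add: mult_bcontfun_apply a cont01_compl)
qed

lemma norm_const_bcontfun: "norm (const_bcontfun x :: 'a::topological_space \<Rightarrow>\<^sub>C 'b::real_normed_vector) = norm x"
proof (rule antisym)
  show "norm (const_bcontfun x :: 'a \<Rightarrow>\<^sub>C 'b) \<le> norm x"
    by (rule norm_bound) simp
  show "norm x \<le> norm (const_bcontfun x :: 'a \<Rightarrow>\<^sub>C 'b)"
    using norm_bounded[of "const_bcontfun x :: 'a \<Rightarrow>\<^sub>C 'b" undefined] by simp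
qed

lemma left_transl_apply:
  fixes f :: "'g::topological_group_add \<Rightarrow>\<^sub>C 'x::real_normed_vector"
  shows "left_transl g f s = f (g + s)"
proof -
  have "continuous_on UNIV (\<lambda>s. f (g + s))"
    by (intro continuous_on_compose2[OF continuous_on_apply_bcontfun] continuous_intros) auto
  then have "(\<lambda>s. f (g + s)) \<in> bcontfun"
    by (rule bcontfun_normI) (rule norm_bounded)
  then show ?thesis
    by (simp add: left_transl_def Bcontfun_inverse)
qed

lemma left_transl_const: "left_transl g (const_bcontfun x) = const_bcontfun x"
  by (rule bcontfun_eqI) (simp add: left_transl_apply)

lemma left_transl_mult_bcontfun:
  assumes "cont01 a"
  shows "left_transl s (mult_bcontfun a f) = mult_bcontfun (\<lambda>t. a (s + t)) (left_transl s f)"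
  by (rule bcontfun_eqI) (simp add: left_transl_apply mult_bcontfun_apply assms cont01_translate)

locale translation_norming_map =
  fixes \<Phi> :: "('g::{topological_group_add, t2_space} \<Rightarrow>\<^sub>C 'x::real_normed_vector) \<Rightarrow> 'x"
  assumes compact_group: "compact (UNIV :: 'g set)"
    and linear: "linear \<Phi>"
    and norm_le: "\<And>f. norm (\<Phi> f) \<le> norm f"
    and const: "\<And>x. \<Phi> (const_bcontfun x) = x"
    and norming_translate: "\<And>f. \<exists>s. norm (\<Phi> (left_transl s f)) = norm f"
    and dual_strictly_convex: "strictly_convex TYPE('x \<Rightarrow>\<^sub>L real)"
    and nontrivial: "\<exists>e::'x. e \<noteq> 0"
begin

lemmas add = linear_add[OF linear] and scaleR = linear_scale[OF linear]
  and diff = linear_diff[OF linear] and zero = linear_0[OF linear]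

lemma bounded_linear_mult_const:
  assumes "cont01 a"
  shows "bounded_linear (\<lambda>x. \<Phi> (mult_bcontfun a (const_bcontfun x)))"
proof (rule bounded_linear_intro[where K = 1])
  show "\<Phi> (mult_bcontfun a (const_bcontfun (x + y))) =
      \<Phi> (mult_bcontfun a (const_bcontfun x)) + \<Phi> (mult_bcontfun a (const_bcontfun y))" for x y
  proof -
    have "mult_bcontfun a (const_bcontfun (x + y)) =
        mult_bcontfun a (const_bcontfun x) + mult_bcontfun a (const_bcontfun y)"
      by (rule bcontfun_eqI) (simp add: mult_bcontfun_apply assms scaleR_add_right)
    then show ?thesis
      by (simp add: add)
  qed
  show "\<Phi> (mult_bcontfun a (const_bcontfun (r *\<^sub>R x))) = r *\<^sub>R \<Phi> (mult_bcontfun a (const_bcontfun x))"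
    for r x
  proof -
    have "mult_bcontfun a (const_bcontfun (r *\<^sub>R x)) = r *\<^sub>R mult_bcontfun a (const_bcontfun x)"
      by (rule bcontfun_eqI) (simp add: mult_bcontfun_apply assms)
    then show ?thesis
      by (simp add: scaleR)
  qed
  show "norm (\<Phi> (mult_bcontfun a (const_bcontfun x))) \<le> norm x * 1" for x
  proof -
    have "norm (mult_bcontfun a (const_bcontfun x)) \<le> norm x"
      using cont01D(2,3)[OF assms]
      by (intro norm_bound) (simp add: mult_bcontfun_apply assms mult_left_le_one_le)
    then show ?thesis
      using norm_le order_trans by auto
  qed
qed

lemma mult_const_compl:
  assumes "cont01 a"
  shows "\<Phi> (mult_bcontfun a (const_bcontfun x)) + \<Phi> (mult_bcontfun (\<lambda>t. 1 - a t) (const_bcontfun x)) = x"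
proof -
  have "mult_bcontfun a (const_bcontfun x) + mult_bcontfun (\<lambda>t. 1 - a t) (const_bcontfun x) =
      const_bcontfun x"
    by (rule bcontfun_eqI) (simp add: mult_bcontfun_apply assms cont01_compl scaleR_diff_left)
  then show ?thesis
    by (metis add const)
qed

text \<open>Writing \<open>W\<^sub>a x = \<Phi> (a \<cdot> x)\<close>, every functional splits as \<open>\<psi> = \<psi> \<circ> W\<^sub>a + \<psi> \<circ> W\<^sub>1\<^sub>-\<^sub>a\<close>
  with additive norms, so strict convexity of the dual makes both parts multiples of \<open>\<psi>\<close>.\<close>

lemma adjoint_mult_const_eigen:
  fixes \<psi> :: "'x \<Rightarrow>\<^sub>L real"
  assumes a: "cont01 a"
  obtains c where "0 \<le> c" "c \<le> 1" "\<And>x. \<psi> (\<Phi> (mult_bcontfun a (const_bcontfun x))) = c * \<psi> x"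
proof -
  let ?b = "\<lambda>t. 1 - a t"
  define \<phi>1 where "\<phi>1 = \<psi> o\<^sub>L Blinfun (\<lambda>x. \<Phi> (mult_bcontfun a (const_bcontfun x)))"
  define \<phi>2 where "\<phi>2 = \<psi> o\<^sub>L Blinfun (\<lambda>x. \<Phi> (mult_bcontfun ?b (const_bcontfun x)))"
  have \<phi>1: "\<phi>1 x = \<psi> (\<Phi> (mult_bcontfun a (const_bcontfun x)))" for x
    by (simp add: \<phi>1_def bounded_linear_Blinfun_apply bounded_linear_mult_const a)
  have \<phi>2: "\<phi>2 x = \<psi> (\<Phi> (mult_bcontfun ?b (const_bcontfun x)))" for x
    by (simp add: \<phi>2_def bounded_linear_Blinfun_apply bounded_linear_mult_const a cont01_compl)
  have sum: "\<phi>1 + \<phi>2 = \<psi>"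
    by (rule blinfun_eqI) (simp add: \<phi>1 \<phi>2 blinfun.add_left mult_const_compl a flip: blinfun.add_right)
  have "norm \<phi>1 + norm \<phi>2 \<le> norm \<psi>"
  proof (rule norm_add_norm_blinfun_le)
    fix x y :: 'x
    assume "norm x \<le> 1" "norm y \<le> 1"
    let ?F = "mult_bcontfun a (const_bcontfun x) + mult_bcontfun ?b (const_bcontfun y)"
    have "norm ?F \<le> 1"
      using \<open>norm x \<le> 1\<close> \<open>norm y \<le> 1\<close>
      by (intro norm_mult_bcontfun_convex_le a) (simp_all add: norm_const_bcontfun)
    then have "norm (\<Phi> ?F) \<le> 1"
      using norm_le order_trans by blast
    have "\<phi>1 x + \<phi>2 y = \<psi> (\<Phi> ?F)"
      by (simp add: \<phi>1 \<phi>2 add blinfun.add_right)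
    also have "\<dots> \<le> norm \<psi> * norm (\<Phi> ?F)"
      by (rule blinfun_apply_le_norm)
    also have "\<dots> \<le> norm \<psi>"
      using \<open>norm (\<Phi> ?F) \<le> 1\<close> by (simp add: mult_left_le)
    finally show "\<phi>1 x + \<phi>2 y \<le> norm \<psi>" .
  qed
  then have "norm (\<phi>1 + \<phi>2) = norm \<phi>1 + norm \<phi>2"
    using norm_triangle_ineq[of \<phi>1 \<phi>2] sum by simp
  then obtain c where c: "0 \<le> c" "c \<le> 1" "\<phi>1 = c *\<^sub>R (\<phi>1 + \<phi>2)"
    by (rule strictly_convex_norm_add_eq[OF dual_strictly_convex])
  then have "\<phi>1 = c *\<^sub>R \<psi>"
    by (simp add: sum)
  then have "\<psi> (\<Phi> (mult_bcontfun a (const_bcontfun x))) = c * \<psi> x" for x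
    by (metis \<phi>1 scaleR_blinfun.rep_eq real_scaleR_def)
  with c(1,2) show thesis
    by (rule that)
qed

lemma mult_const_eq_scaleR:
  assumes a: "cont01 a"
  obtains \<mu> where "0 \<le> \<mu>" "\<mu> \<le> 1" "\<And>x. \<Phi> (mult_bcontfun a (const_bcontfun x)) = \<mu> *\<^sub>R x"
proof -
  have eigen: "\<exists>\<mu>. \<forall>x. \<psi> (\<Phi> (mult_bcontfun a (const_bcontfun x))) = \<mu> * \<psi> x" for \<psi> :: "'x \<Rightarrow>\<^sub>L real"
    using adjoint_mult_const_eigen[OF a, of \<psi>] by metis
  obtain e :: 'x where "e \<noteq> 0"
    using nontrivial by blast
  moreover obtain \<psi>0 :: "'x \<Rightarrow>\<^sub>L real" where "\<psi>0 e = norm e"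
    using exists_norming_functional by blast
  ultimately have "\<psi>0 \<noteq> 0"
    by auto
  obtain \<mu> where "0 \<le> \<mu>" "\<mu> \<le> 1" "\<And>x. \<psi>0 (\<Phi> (mult_bcontfun a (const_bcontfun x))) = \<mu> * \<psi>0 x"
    using adjoint_mult_const_eigen[OF a] by blast
  with scalar_if_adjoint_eigen[OF eigen \<open>\<psi>0 \<noteq> 0\<close>] show thesis
    using that by blast
qed

text \<open>\<open>weight a\<close> plays the role of the integral of \<open>a\<close> against a probability measure on \<open>G\<close>;
  the rest of the argument shows that this measure is a point mass.\<close>

definition weight :: "('g \<Rightarrow> real) \<Rightarrow> real" where
  "weight a = (SOME \<mu>. 0 \<le> \<mu> \<and> \<mu> \<le> 1 \<and> (\<forall>x. \<Phi> (mult_bcontfun a (const_bcontfun x)) = \<mu> *\<^sub>R x))"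

lemma weight:
  assumes "cont01 a"
  shows weight_nonneg: "0 \<le> weight a"
    and weight_le_1: "weight a \<le> 1"
    and mult_const_eq_weight: "\<Phi> (mult_bcontfun a (const_bcontfun x)) = weight a *\<^sub>R x"
proof -
  have "\<exists>\<mu>. 0 \<le> \<mu> \<and> \<mu> \<le> 1 \<and> (\<forall>x. \<Phi> (mult_bcontfun a (const_bcontfun x)) = \<mu> *\<^sub>R x)"
    using mult_const_eq_scaleR[OF assms] by metis
  from someI_ex[OF this] show "0 \<le> weight a" "weight a \<le> 1"
      "\<Phi> (mult_bcontfun a (const_bcontfun x)) = weight a *\<^sub>R x"
    unfolding weight_def by blast+
qed

lemma weight_eqI:
  assumes "cont01 a" "\<And>x. \<Phi> (mult_bcontfun a (const_bcontfun x)) = \<mu> *\<^sub>R x"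
  shows "weight a = \<mu>"
proof -
  obtain e :: 'x where "e \<noteq> 0"
    using nontrivial by blast
  moreover have "weight a *\<^sub>R e = \<mu> *\<^sub>R e"
    using mult_const_eq_weight[OF assms(1)] assms(2) by metis
  ultimately show ?thesis
    by simp
qed

lemma weight_const:
  assumes "0 \<le> c" "c \<le> 1"
  shows "weight (\<lambda>_. c) = c"
proof (rule weight_eqI)
  show c: "cont01 (\<lambda>_. c)"
    using assms by (rule cont01_const)
  fix x :: 'x
  have "mult_bcontfun (\<lambda>_. c) (const_bcontfun x) = c *\<^sub>R const_bcontfun x"
    by (intro bcontfun_eqI) (simp add: mult_bcontfun_apply[OF c])
  then show "\<Phi> (mult_bcontfun (\<lambda>_. c) (const_bcontfun x)) = c *\<^sub>R x"
    using scaleR const by metis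
qed

lemma weight_add:
  assumes "cont01 a" "cont01 b" "cont01 (\<lambda>t. a t + b t)"
  shows "weight (\<lambda>t. a t + b t) = weight a + weight b"
proof (rule weight_eqI[OF assms(3)])
  fix x :: 'x
  have "mult_bcontfun (\<lambda>t. a t + b t) (const_bcontfun x) =
      mult_bcontfun a (const_bcontfun x) + mult_bcontfun b (const_bcontfun x)"
    by (rule bcontfun_eqI) (simp add: mult_bcontfun_apply assms scaleR_add_left)
  then show "\<Phi> (mult_bcontfun (\<lambda>t. a t + b t) (const_bcontfun x)) = (weight a + weight b) *\<^sub>R x"
    by (simp add: add mult_const_eq_weight assms scaleR_add_left)
qed

lemma weight_compl:
  assumes "cont01 a"
  shows "weight (\<lambda>t. 1 - a t) = 1 - weight a"
proof -
  have "weight (\<lambda>t. a t + (1 - a t)) = weight a + weight (\<lambda>t. 1 - a t)"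
    by (rule weight_add[OF assms cont01_compl[OF assms]]) (simp add: cont01_const)
  then show ?thesis
    using weight_const[of 1] by simp
qed

lemma weight_mono:
  assumes "cont01 a" "cont01 b" "\<And>t. a t \<le> b t"
  shows "weight a \<le> weight b"
proof -
  let ?d = "\<lambda>t. b t - a t"
  have "0 \<le> ?d t \<and> ?d t \<le> 1" for t
    using assms(3)[of t] cont01D(3)[OF assms(2), of t] cont01D(2)[OF assms(1), of t] by linarith
  then have "cont01 ?d"
    using cont01D(1)[OF assms(1)] cont01D(1)[OF assms(2)] unfolding cont01_def
    by (auto intro!: continuous_intros)
  moreover have "(\<lambda>t. a t + ?d t) = b"
    by simp
  ultimately have "weight b = weight a + weight ?d"
    using weight_add[OF assms(1)] assms(2) by metis
  then show ?thesis
    using weight_nonneg[OF \<open>cont01 ?d\<close>] by simp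
qed

lemma norm_mult_le_weight_of_norm_le_1:
  assumes a: "cont01 a" and "norm f \<le> 1"
  shows "norm (\<Phi> (mult_bcontfun a f)) \<le> weight a"
proof (cases "\<Phi> (mult_bcontfun a f) = 0")
  case True
  then show ?thesis
    using weight_nonneg[OF a] by simp
next
  case False
  define w where "w = \<Phi> (mult_bcontfun a f)"
  define v where "v = (1 / norm w) *\<^sub>R w"
  have "norm v = 1" "w = norm w *\<^sub>R v"
    using False by (simp_all add: v_def w_def)
  obtain \<psi> :: "'x \<Rightarrow>\<^sub>L real" where "norm \<psi> \<le> 1" "\<psi> v = norm v"
    using exists_norming_functional by blast
  \<comment> \<open>Pad \<open>a \<cdot> f\<close> with \<open>(1 - a) \<cdot> v\<close>: the sum stays in the unit ball and \<open>\<psi>\<close> evaluates its image to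
    \<open>norm w + 1 - weight a\<close>.\<close>
  let ?F = "mult_bcontfun a f + mult_bcontfun (\<lambda>t. 1 - a t) (const_bcontfun v)"
  have "norm ?F \<le> 1"
    using assms \<open>norm v = 1\<close> by (intro norm_mult_bcontfun_convex_le) (simp_all add: norm_const_bcontfun)
  have "\<psi> (\<Phi> ?F) \<le> norm \<psi> * norm (\<Phi> ?F)"
    by (rule blinfun_apply_le_norm)
  also have "\<dots> \<le> 1 * 1"
    using \<open>norm \<psi> \<le> 1\<close> norm_le[of ?F] \<open>norm ?F \<le> 1\<close> by (intro mult_mono) auto
  finally have "\<psi> (\<Phi> ?F) \<le> 1"
    by simp
  moreover have "\<Phi> ?F = norm w *\<^sub>R v + (1 - weight a) *\<^sub>R v"
    using \<open>w = norm w *\<^sub>R v\<close>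
    by (simp add: add mult_const_eq_weight a cont01_compl weight_compl w_def[symmetric])
  ultimately have "norm w + (1 - weight a) \<le> 1"
    using \<open>\<psi> v = norm v\<close> \<open>norm v = 1\<close> by (simp add: blinfun.add_right blinfun.scaleR_right)
  then show ?thesis
    by (simp add: w_def)
qed

lemma norm_mult_le_weight:
  assumes a: "cont01 a"
  shows "norm (\<Phi> (mult_bcontfun a f)) \<le> weight a * norm f"
proof (cases "f = 0")
  case True
  then have "mult_bcontfun a f = 0"
    by (intro bcontfun_eqI) (simp add: mult_bcontfun_apply a)
  then show ?thesis
    using True by (simp add: zero)
next
  case False
  let ?g = "(1 / norm f) *\<^sub>R f"
  have "mult_bcontfun a f = norm f *\<^sub>R mult_bcontfun a ?g"
    using False by (intro bcontfun_eqI) (simp add: mult_bcontfun_apply a)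
  then have "norm (\<Phi> (mult_bcontfun a f)) = norm f * norm (\<Phi> (mult_bcontfun a ?g))"
    by (simp add: scaleR)
  also have "\<dots> \<le> norm f * weight a"
    using False by (intro mult_left_mono norm_mult_le_weight_of_norm_le_1 a) simp_all
  finally show ?thesis
    by (simp add: mult.commute)
qed

lemma weight_translate_eq_1:
  assumes a: "cont01 a" and "a t0 = 1"
  obtains s where "weight (\<lambda>t. a (s + t)) = 1"
proof -
  obtain e :: 'x where "e \<noteq> 0"
    using nontrivial by blast
  define e' where "e' = (1 / norm e) *\<^sub>R e"
  have "norm e' = 1"
    using \<open>e \<noteq> 0\<close> by (simp add: e'_def)
  let ?F = "mult_bcontfun a (const_bcontfun e')"
  have "norm ?F \<le> 1"
    using \<open>norm e' = 1\<close> cont01D(2,3)[OF a]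
    by (intro norm_bound) (simp add: mult_bcontfun_apply a)
  moreover have "1 \<le> norm ?F"
    using norm_bounded[of ?F t0] \<open>a t0 = 1\<close> \<open>norm e' = 1\<close> by (simp add: mult_bcontfun_apply a)
  ultimately obtain s where "norm (\<Phi> (left_transl s ?F)) = 1"
    using norming_translate[of ?F] by fastforce
  moreover have "\<Phi> (left_transl s ?F) = weight (\<lambda>t. a (s + t)) *\<^sub>R e'"
    by (simp add: left_transl_mult_bcontfun left_transl_const a mult_const_eq_weight cont01_translate)
  ultimately have "\<bar>weight (\<lambda>t. a (s + t))\<bar> = 1"
    using \<open>norm e' = 1\<close> by simp
  then show thesis
    using that weight_nonneg[OF cont01_translate[OF a, of s]] by (simp add: abs_if split: if_splits)
qed

definition supporting :: "'g set \<Rightarrow> bool" where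
  "supporting C \<longleftrightarrow> (\<forall>c. cont01 c \<longrightarrow> (\<forall>t\<in>C. c t = 0) \<longrightarrow> weight c = 0)"

lemma supportingI:
  "(\<And>c. cont01 c \<Longrightarrow> (\<And>t. t \<in> C \<Longrightarrow> c t = 0) \<Longrightarrow> weight c = 0) \<Longrightarrow> supporting C"
  unfolding supporting_def by blast

lemma supportingD: "supporting C \<Longrightarrow> cont01 c \<Longrightarrow> (\<And>t. t \<in> C \<Longrightarrow> c t = 0) \<Longrightarrow> weight c = 0"
  unfolding supporting_def by blast

lemma weight_le_truncate:
  assumes c: "cont01 c" and "0 \<le> \<epsilon>" "\<epsilon> \<le> 1"
  shows "weight c \<le> weight (\<lambda>t. max (c t - \<epsilon>) 0) + \<epsilon>"
proof -
  let ?c' = "\<lambda>t. max (c t - \<epsilon>) 0"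
  have c': "cont01 ?c'"
    using cont01_truncate[OF c] assms(2) .
  have "cont01 (\<lambda>t. ?c' t + \<epsilon>)"
  proof -
    have "?c' t + \<epsilon> \<le> 1" for t
      using cont01D(3)[OF c, of t] assms(2,3) by (simp add: max_def)
    then show ?thesis
      using cont01D(1)[OF c'] assms(2) unfolding cont01_def by (auto intro!: continuous_intros)
  qed
  then have "weight c \<le> weight (\<lambda>t. ?c' t + \<epsilon>)"
    by (rule weight_mono[OF c]) simp
  also have "\<dots> = weight ?c' + \<epsilon>"
    using weight_add[OF c' cont01_const[OF assms(2,3)] \<open>cont01 (\<lambda>t. ?c' t + \<epsilon>)\<close>]
      weight_const[OF assms(2,3)] by simp
  finally show ?thesis .
qed

lemma weight_le_if_supporting:
  assumes "supporting K" "cont01 c" "\<And>t. t \<in> K \<Longrightarrow> c t \<le> \<epsilon>" "0 \<le> \<epsilon>" "\<epsilon> \<le> 1"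
  shows "weight c \<le> \<epsilon>"
proof -
  have "weight (\<lambda>t. max (c t - \<epsilon>) 0) = 0"
    using assms by (intro supportingD cont01_truncate) auto
  then show ?thesis
    using weight_le_truncate[OF assms(2,4,5)] by simp
qed

lemma weight_eq_0I:
  assumes "cont01 c" "\<And>\<epsilon>. 0 < \<epsilon> \<Longrightarrow> \<epsilon> \<le> 1 \<Longrightarrow> weight c \<le> \<epsilon>"
  shows "weight c = 0"
proof -
  have "weight c \<le> 0 + \<epsilon>" if "0 < \<epsilon>" for \<epsilon>
    using assms(2)[OF that] weight_le_1[OF assms(1)] by (cases "\<epsilon> \<le> 1") auto
  then have "weight c \<le> 0"
    by (rule field_le_epsilon)
  then show ?thesis
    using weight_nonneg[OF assms(1)] by simp
qed

lemma not_supporting_empty: "\<not> supporting {}"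
  using weight_const[of 1] cont01_const[of 1] by (auto simp: supporting_def)

lemma supporting_UNIV: "supporting UNIV"
proof -
  have "weight c = 0" if "\<And>t. c t = 0" for c
  proof -
    have "c = (\<lambda>_. 0)"
      using that by blast
    then show ?thesis
      using weight_const[of 0] by simp
  qed
  then show ?thesis
    unfolding supporting_def by blast
qed

lemma supporting_Int:
  assumes "closed C1" "supporting C1" "closed C2" "supporting C2"
  shows "supporting (C1 \<inter> C2)"
proof (rule supportingI)
  fix c
  assume c: "cont01 c" and vanish: "\<And>t. t \<in> C1 \<inter> C2 \<Longrightarrow> c t = 0"
  show "weight c = 0"
  proof (rule weight_eq_0I[OF c])
    fix \<epsilon> :: real
    assume "0 < \<epsilon>" "\<epsilon> \<le> 1"
    obtain p q where "cont01 p" "cont01 q" "\<And>t. t \<in> C1 \<Longrightarrow> p t = 0" "\<And>t. t \<in> C2 \<Longrightarrow> q t = 0"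
      and sum: "\<And>t. p t + q t = max (c t - \<epsilon>) 0"
      using cont01_split_near_closed_Int[OF compact_group assms(1,3) c] vanish \<open>0 < \<epsilon>\<close> by blast
    then have "weight p = 0" "weight q = 0"
      using assms(2,4) by (simp_all add: supportingD)
    moreover have "weight (\<lambda>t. max (c t - \<epsilon>) 0) = weight p + weight q"
      using weight_add[of p q] sum cont01_truncate[OF c, of \<epsilon>] \<open>0 < \<epsilon>\<close> \<open>cont01 p\<close> \<open>cont01 q\<close>
      by simp
    ultimately show "weight c \<le> \<epsilon>"
      using weight_le_truncate[OF c, of \<epsilon>] \<open>0 < \<epsilon>\<close> \<open>\<epsilon> \<le> 1\<close> by simp
  qed
qed

lemma supporting_Inter:
  assumes "finite \<F>" "\<And>C. C \<in> \<F> \<Longrightarrow> closed C \<and> supporting C"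
  shows "closed (\<Inter>\<F>) \<and> supporting (\<Inter>\<F>)"
  using assms
proof (induction \<F> rule: finite_induct)
  case empty
  then show ?case
    using supporting_UNIV by simp
next
  case (insert C \<F>)
  then have "closed C" "supporting C" "closed (\<Inter>\<F>)" "supporting (\<Inter>\<F>)"
    by simp_all
  then show ?case
    using supporting_Int[of C "\<Inter>\<F>"] by auto
qed

lemma supporting_if_full_weight:
  assumes a: "cont01 a" and "weight a = 1" and outside: "\<And>t. t \<notin> C \<Longrightarrow> a t = 0"
  shows "supporting C"
proof (rule supportingI)
  fix c
  assume c: "cont01 c" and vanish: "\<And>t. t \<in> C \<Longrightarrow> c t = 0"
  have "c t \<le> 1 - a t" for t
    using vanish[of t] outside[of t] cont01D[OF c] cont01D[OF a] by (cases "t \<in> C") auto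
  then have "weight c \<le> weight (\<lambda>t. 1 - a t)"
    by (intro weight_mono c cont01_compl a)
  also have "\<dots> = 0"
    using weight_compl[OF a] \<open>weight a = 1\<close> by simp
  finally show "weight c = 0"
    using weight_nonneg[OF c] by simp
qed

text \<open>A bump at \<open>0\<close> has a translate of full weight, so the weight is carried by a translate
  of any neighbourhood of \<open>0\<close>; a small neighbourhood cannot contain two given distinct points
  after translation.\<close>

lemma exists_supporting_separating:
  assumes "p \<noteq> q"
  obtains C where "closed C" "supporting C" "p \<notin> C \<or> q \<notin> C"
proof -
  have "- p + q \<noteq> 0"
    using assms by (metis add.right_neutral add_minus_cancel)
  then obtain W where "open W" "0 \<in> W" and avoid: "\<And>u v. u \<in> W \<Longrightarrow> v \<in> W \<Longrightarrow> - v + u \<noteq> - p + q"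
    using nhds_zero_avoiding_difference by blast
  then obtain a C0 where a: "cont01 a" and "a 0 = 1" "closed C0" "C0 \<subseteq> W"
    and outside: "\<And>t. t \<notin> C0 \<Longrightarrow> a t = 0"
    using bump_compact_t2[OF compact_group] by metis
  obtain s where s: "weight (\<lambda>t. a (s + t)) = 1"
    using weight_translate_eq_1[OF a \<open>a 0 = 1\<close>] by blast
  define C where "C = (\<lambda>t. s + t) -` C0"
  have "closed C"
    unfolding C_def using \<open>closed C0\<close> by (intro continuous_closed_vimage continuous_intros)
  moreover have "supporting C"
    by (rule supporting_if_full_weight[OF cont01_translate[OF a] s]) (simp add: C_def outside)
  moreover have "p \<notin> C \<or> q \<notin> C"
  proof (rule ccontr)
    assume "\<not> (p \<notin> C \<or> q \<notin> C)"
    then have "s + p \<in> W" "s + q \<in> W"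
      using \<open>C0 \<subseteq> W\<close> by (auto simp: C_def)
    moreover have "- (s + p) + (s + q) = - p + q"
      by (simp only: minus_add add.assoc minus_add_cancel)
    ultimately show False
      using avoid by metis
  qed
  ultimately show thesis
    by (rule that)
qed

lemma Inter_closed_supporting_singleton:
  obtains y where "\<Inter>{C. closed C \<and> supporting C} = {y}"
proof -
  let ?\<F> = "{C. closed C \<and> supporting C}"
  have "UNIV \<inter> \<Inter>?\<F> \<noteq> {}"
  proof (rule compact_imp_fip[OF compact_group])
    show "closed C" if "C \<in> ?\<F>" for C
      using that by simp
    fix \<F>'
    assume "finite \<F>'" "\<F>' \<subseteq> ?\<F>"
    then have "supporting (\<Inter>\<F>')"
      using supporting_Inter by blast
    then show "UNIV \<inter> \<Inter>\<F>' \<noteq> {}"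
      using not_supporting_empty by force
  qed
  then obtain y where y: "y \<in> \<Inter>?\<F>"
    by auto
  have "q = y" if q: "q \<in> \<Inter>?\<F>" for q
  proof (rule ccontr)
    assume "q \<noteq> y"
    then obtain C where "closed C" "supporting C" and separates: "y \<notin> C \<or> q \<notin> C"
      by (metis exists_supporting_separating)
    with y q show False
      by blast
  qed
  with y show thesis
    by (intro that) blast
qed

lemma supporting_singleton_if_Inter_subset:
  assumes Inter: "\<Inter>{C. closed C \<and> supporting C} \<subseteq> {y}"
  shows "supporting {y}"
proof (rule supportingI)
  let ?\<F> = "{C. closed C \<and> supporting C}"
  fix c
  assume c: "cont01 c" and "\<And>t. t \<in> {y} \<Longrightarrow> c t = 0"
  then have "c y = 0"
    by simp
  show "weight c = 0"
  proof (rule weight_eq_0I[OF c])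
    fix \<epsilon> :: real
    assume "0 < \<epsilon>" "\<epsilon> \<le> 1"
    have "open {t. c t < \<epsilon>}"
      using cont01D(1)[OF c] by (rule open_Collect_less[OF _ continuous_on_const])
    moreover have "\<Inter>?\<F> \<subseteq> {t. c t < \<epsilon>}"
      using Inter \<open>c y = 0\<close> \<open>0 < \<epsilon>\<close> by auto
    ultimately obtain \<F>' where "finite \<F>'" "\<F>' \<subseteq> ?\<F>" "\<Inter>\<F>' \<subseteq> {t. c t < \<epsilon>}"
      using compact_Inter_closed_subset_open[OF compact_group, of ?\<F>] by blast
    then have "supporting (\<Inter>\<F>')"
      using supporting_Inter by blast
    then show "weight c \<le> \<epsilon>"
      by (rule weight_le_if_supporting[OF _ c])
        (use \<open>\<Inter>\<F>' \<subseteq> {t. c t < \<epsilon>}\<close> \<open>0 < \<epsilon>\<close> \<open>\<epsilon> \<le> 1\<close> in force)+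
  qed
qed

lemma exists_supporting_singleton: "\<exists>y. supporting {y}"
  using Inter_closed_supporting_singleton supporting_singleton_if_Inter_subset by (metis order_refl)

lemma norm_le_if_small_at_support:
  fixes f :: "'g \<Rightarrow>\<^sub>C 'x"
  assumes "supporting {y}" "f y = 0" "0 < \<epsilon>"
  shows "norm (\<Phi> f) \<le> \<epsilon>"
proof -
  define C where "C = {t. \<epsilon> \<le> norm (f t)}"
  have "closed C"
    unfolding C_def
    by (rule closed_Collect_le[OF continuous_on_const continuous_on_norm[OF continuous_on_apply_bcontfun]])
  moreover have "{y} \<inter> C = {}"
    using assms(2,3) by (auto simp: C_def)
  ultimately obtain a where a: "cont01 a" "a y = 0" "\<And>t. t \<in> C \<Longrightarrow> a t = 1"
    using Urysohn_compact_t2[OF compact_group closed_singleton] by (metis singletonI)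
  let ?b = "\<lambda>t. 1 - a t"
  have "weight a = 0"
    using assms(1) a by (intro supportingD) auto
  then have "\<Phi> (mult_bcontfun a f) = 0"
    using norm_mult_le_weight[OF a(1), of f] by simp
  moreover have "f = mult_bcontfun a f + mult_bcontfun ?b f"
    by (rule bcontfun_eqI) (simp add: mult_bcontfun_apply a(1) cont01_compl scaleR_diff_left)
  ultimately have "\<Phi> f = \<Phi> (mult_bcontfun ?b f)"
    by (metis add add_0)
  also have "norm \<dots> \<le> norm (mult_bcontfun ?b f)"
    by (rule norm_le)
  also have "\<dots> \<le> \<epsilon>"
  proof (rule norm_bound)
    fix t
    have "0 \<le> ?b t" "?b t \<le> 1"
      using cont01D[OF a(1)] by auto
    moreover have "?b t = 0 \<or> norm (f t) \<le> \<epsilon>"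
      using a(3)[of t] by (auto simp: C_def)
    ultimately show "norm (mult_bcontfun ?b f t) \<le> \<epsilon>"
      using assms(3) by (auto simp: mult_bcontfun_apply a(1) cont01_compl intro: mult_le_one order_trans[OF mult_left_le_one_le])
  qed
  finally show ?thesis .
qed

lemma eq_0_if_vanishes_at_support:
  fixes f :: "'g \<Rightarrow>\<^sub>C 'x"
  assumes "supporting {y}" "f y = 0"
  shows "\<Phi> f = 0"
proof -
  have "norm (\<Phi> f) \<le> 0 + \<epsilon>" if "0 < \<epsilon>" for \<epsilon>
    using norm_le_if_small_at_support[OF assms that] by simp
  then have "norm (\<Phi> f) \<le> 0"
    by (rule field_le_epsilon)
  then show ?thesis
    by simp
qed

lemma eq_eval: "\<exists>y. \<forall>f. \<Phi> f = f y"
proof -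
  obtain y where "supporting {y}"
    using exists_supporting_singleton by blast
  have "\<Phi> f = f y" for f
  proof -
    have "\<Phi> (f - const_bcontfun (f y)) = 0"
      using \<open>supporting {y}\<close> by (rule eq_0_if_vanishes_at_support) simp
    then show ?thesis
      by (simp add: diff const)
  qed
  then show ?thesis
    by blast
qed

end

section \<open>Isometric left multipliers\<close>

lemma linear_inv_of_bij:
  assumes "linear U" "bij U"
  shows "linear (inv U)"
proof (rule linearI)
  have U_inv: "U (inv U z) = z" and inv_U: "inv U (U x) = x" for x z
    using assms(2) by (simp_all add: bij_is_surj bij_is_inj surj_f_inv_f)
  show "inv U (x + y) = inv U x + inv U y" for x y
    by (metis U_inv inv_U linear_add[OF assms(1)])
  show "inv U (c *\<^sub>R x) = c *\<^sub>R inv U x" for c x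
    by (metis U_inv inv_U linear_scale[OF assms(1)])
qed

lemma left_multiplier_apply:
  assumes "left_multiplier T"
  shows "T f s = T (left_transl s f) 0"
  using assms by (simp add: left_multiplier_def left_transl_apply)

lemma left_multiplier_const:
  assumes "left_multiplier T"
  shows "T (const_bcontfun x) = const_bcontfun (T (const_bcontfun x) 0)"
  by (rule bcontfun_eqI) (metis assms left_multiplier_apply left_transl_const const_bcontfun.rep_eq)

lemma left_multiplier_linear_on_constants:
  fixes T :: "('g::topological_group_add \<Rightarrow>\<^sub>C 'x::real_normed_vector) \<Rightarrow> ('g \<Rightarrow>\<^sub>C 'x)"
  assumes "left_multiplier T"
  shows "linear (\<lambda>x. T (const_bcontfun x) 0)"
proof -
  have lin: "linear T"
    using assms by (simp add: left_multiplier_def bounded_linear.linear)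
  have "const_bcontfun (x + y) = (const_bcontfun x + const_bcontfun y :: 'g \<Rightarrow>\<^sub>C 'x)" for x y
    by (rule bcontfun_eqI) simp
  moreover have "const_bcontfun (c *\<^sub>R x) = (c *\<^sub>R const_bcontfun x :: 'g \<Rightarrow>\<^sub>C 'x)" for c x
    by (rule bcontfun_eqI) simp
  ultimately show ?thesis
    by (intro linearI) (simp_all add: linear_add[OF lin] linear_scale[OF lin])
qed

lemma injective_left_multiplier_const_preimage:
  assumes "left_multiplier T" "inj T" "T h = const_bcontfun z"
  shows "h = const_bcontfun (h 0)"
proof (rule bcontfun_eqI)
  fix t
  have "T (left_transl t h) = T h"
    using assms(1,3) by (simp add: left_multiplier_def left_transl_const)
  then have "left_transl t h = h"
    using assms(2) by (simp add: inj_eq)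
  moreover have "h t = left_transl t h 0"
    by (simp add: left_transl_apply)
  ultimately show "h t = const_bcontfun (h 0) t"
    by simp
qed

lemma isometric_left_multiplier_on_constants:
  fixes T :: "('g::topological_group_add \<Rightarrow>\<^sub>C 'x::real_normed_vector) \<Rightarrow> ('g \<Rightarrow>\<^sub>C 'x)"
  assumes T: "left_multiplier T" "\<And>f. norm (T f) = norm f" "bij T"
  shows "bounded_linear (\<lambda>x. T (const_bcontfun x) 0)" "bij (\<lambda>x. T (const_bcontfun x) 0)"
    "\<And>x. norm (T (const_bcontfun x) 0) = norm x"
proof -
  let ?U = "\<lambda>x. T (const_bcontfun x) 0"
  note lin = left_multiplier_linear_on_constants[OF T(1)]
  show norm_U: "norm (?U x) = norm x" for x
  proof -
    have "norm (?U x) = norm (const_bcontfun (?U x) :: 'g \<Rightarrow>\<^sub>C 'x)"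
      by (simp add: norm_const_bcontfun)
    also have "\<dots> = norm (T (const_bcontfun x))"
      by (simp flip: left_multiplier_const[OF T(1)])
    also have "\<dots> = norm x"
      by (simp add: T(2) norm_const_bcontfun)
    finally show ?thesis .
  qed
  have "inj ?U"
  proof (rule injI)
    fix x y
    assume "?U x = ?U y"
    then have "norm (?U (x - y)) = 0"
      by (simp add: linear_diff[OF lin])
    then show "x = y"
      by (simp add: norm_U)
  qed
  moreover have "z \<in> range ?U" for z
  proof -
    obtain h where h: "T h = const_bcontfun z"
      using bij_is_surj[OF T(3)] by (metis surjD)
    then have "h = const_bcontfun (h 0)"
      using injective_left_multiplier_const_preimage[OF T(1) bij_is_inj[OF T(3)]] by blast
    then have "?U (h 0) = z"
      using h by (metis const_bcontfun.rep_eq)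
    then show ?thesis
      by blast
  qed
  ultimately show "bij ?U"
    by (intro bijI) blast+
  show "bounded_linear ?U"
    using lin norm_U by (auto simp: bounded_linear_def bounded_linear_axioms_def intro!: exI[of _ 1])
qed

lemma translation_norming_map_of_left_multiplier:
  fixes T :: "('g::{topological_group_add, t2_space} \<Rightarrow>\<^sub>C 'x::real_normed_vector) \<Rightarrow> ('g \<Rightarrow>\<^sub>C 'x)"
  assumes "compact (UNIV :: 'g set)" "strictly_convex TYPE('x \<Rightarrow>\<^sub>L real)" "\<exists>e::'x. e \<noteq> 0"
    and T: "left_multiplier T" "\<And>f. norm (T f) = norm f" "bij T"
  shows "translation_norming_map (\<lambda>f. inv (\<lambda>x. T (const_bcontfun x) 0) (T f 0))"
proof -
  let ?U = "\<lambda>x. T (const_bcontfun x) 0"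
  note U = isometric_left_multiplier_on_constants[OF T]
  have inv_U: "inv ?U (?U x) = x" for x
    by (rule inv_f_f[OF bij_is_inj[OF U(2)]])
  have norm_inv_U: "norm (inv ?U z) = norm z" for z
    by (metis U(3) surj_f_inv_f[OF bij_is_surj[OF U(2)]])
  have "linear T"
    using T(1) by (simp add: left_multiplier_def bounded_linear.linear)
  then have "linear (\<lambda>f. T f 0)"
    by (intro linearI) (simp_all add: linear_add linear_scale)
  then have "linear (\<lambda>f. inv ?U (T f 0))"
    using linear_compose[OF _ linear_inv_of_bij[OF bounded_linear.linear[OF U(1)] U(2)]] by (simp add: o_def)
  moreover have "norm (inv ?U (T f 0)) \<le> norm f" for f
    using norm_bounded[of "T f" 0] by (simp add: norm_inv_U T(2))
  moreover have "\<exists>s. norm (inv ?U (T (left_transl s f) 0)) = norm f" for f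
  proof -
    obtain s where s: "\<And>t. norm (T f t) \<le> norm (T f s)"
      using continuous_attains_sup[OF \<open>compact UNIV\<close>, of "\<lambda>t. norm (T f t)"]
      by (auto intro!: continuous_intros)
    then have "norm (T f) = norm (T f s)"
      using norm_bounded[of "T f" s] by (intro antisym norm_bound) auto
    then have "norm (inv ?U (T (left_transl s f) 0)) = norm f"
      by (simp add: norm_inv_U T(2) flip: left_multiplier_apply[OF T(1)])
    then show ?thesis
      by blast
  qed
  ultimately show ?thesis
    using assms(1-3) inv_U by (intro translation_norming_map.intro)
qed

lemma isometric_left_multiplier_eq_translate:
  fixes T :: "('g::{topological_group_add, t2_space} \<Rightarrow>\<^sub>C 'x::real_normed_vector) \<Rightarrow> ('g \<Rightarrow>\<^sub>C 'x)"
  assumes "compact (UNIV :: 'g set)" "strictly_convex TYPE('x \<Rightarrow>\<^sub>L real)"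
    and T: "left_multiplier T" "\<And>f. norm (T f) = norm f" "bij T"
  obtains y where "\<And>f s. T f s = T (const_bcontfun (f (s + y))) 0"
proof (cases "\<exists>e::'x. e \<noteq> 0")
  case True
  let ?U = "\<lambda>x. T (const_bcontfun x) 0"
  interpret translation_norming_map "\<lambda>f. inv ?U (T f 0)"
    using translation_norming_map_of_left_multiplier[OF assms(1,2) True T] .
  obtain y where y: "\<And>f. inv ?U (T f 0) = f y"
    using eq_eval by blast
  have "T f s = ?U (f (s + y))" for f s
  proof -
    have "T f s = ?U (inv ?U (T (left_transl s f) 0))"
      using surj_f_inv_f[OF bij_is_surj[OF isometric_left_multiplier_on_constants(2)[OF T]]]
      by (simp flip: left_multiplier_apply[OF T(1)])
    also have "inv ?U (T (left_transl s f) 0) = f (s + y)"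
      by (simp only: y left_transl_apply)
    finally show ?thesis .
  qed
  then show thesis
    by (rule that)
next
  case False
  then have "x = 0" for x :: 'x
    by blast
  then show thesis
    by (metis that)
qed

theorem mainTheorem5:
  fixes T :: "('g::{topological_group_add, t2_space} \<Rightarrow>\<^sub>C 'x::banach) \<Rightarrow> ('g \<Rightarrow>\<^sub>C 'x)"
  assumes G_compact: "compact (UNIV :: 'g set)"
    and X_separable: "separable_space (euclidean :: 'x topology)"
    and dual_strictly_convex: "strictly_convex TYPE('x \<Rightarrow>\<^sub>L real)"
    and T_mult: "left_multiplier T"
    and T_isometric: "\<forall>f. norm (T f) = norm f"
    and T_invertible: "bij T"
  shows "\<exists>U y. bounded_linear U \<and> bij U \<and> (\<forall>x. norm (U x) = norm x) \<and>
           (\<forall>f s. apply_bcontfun (T f) s = U (apply_bcontfun f (s + y)))"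
proof -
  have isometric: "\<And>f. norm (T f) = norm f"
    using T_isometric by blast
  obtain y where "\<And>f s. T f s = T (const_bcontfun (f (s + y))) 0"
    using isometric_left_multiplier_eq_translate[OF G_compact dual_strictly_convex T_mult isometric T_invertible]
    by blast
  moreover note isometric_left_multiplier_on_constants[OF T_mult isometric T_invertible]
  ultimately show ?thesis
    by blast
qed

end
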